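(* Let $G$ be a finite group, $\mathfrak{K}$ an algebraically closed field of characteristic zero, $\omega$ a normalized $3$-cocycle on $G$ with values in $\mathfrak{K}^\times$, and $z\in\mathrm{Z}(G)$ a central element such that the $2$-cocycle $\gamma_{\omega,z}(g,h)=\omega(g,h,z)\,\omega(g,z,h)^{-1}\,\omega(z,g,h)$ represents a nontrivial class in $\mathrm{H}^2(G,\mathfrak{K}^\times)$. Then in the fusion category $\mathbf{Vec}_G^\omega$, the isomorphism class of the simple object $X_z$ (which lies in the center of the classifying category) is not in the image of the characteristic homomorphism $\mathrm{Iso}(\mathbf{Z}(\mathbb{B}(\mathbf{Vec}_G^\omega)))\to\mathrm{Z}(\mathbf{Ho}(\mathbb{B}(\mathbf{Vec}_G^\omega)))$; that is, $X_z$ admits no structure of an object of the Drinfeld center.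
   Context: $\mathbf{Vec}_G^\omega$ is the fusion category of finite-dimensional $G$-graded $\mathfrak{K}$-vector spaces: its simple objects are $X_g$, $g\in G$ (one-dimensional in degree $g$), with $X_g\otimes X_h=X_{gh}$ and associativity constraint $(X_g\otimes X_h)\otimes X_k\to X_g\otimes(X_h\otimes X_k)$ given by the scalar $\omega(g,h,k)$. $\mathbb{B}(\mathbf{Vec}_G^\omega)$ is the one-object bicategory with endomorphism category $\mathbf{Vec}_G^\omega$. Its Drinfeld center is the usual Drinfeld center: objects $(X,p)$ with natural isomorphisms $p(Y)\colon X\otimes Y\to Y\otimes X$ satisfying $p(I)=$ unit constraints and the hexagon compatibility $p(Y\otimes Z)=(\mathrm{id}_Y\otimes p(Z))(p(Y)\otimes\mathrm{id}_Z)$ (associators inserted). $\mathrm{Z}(\mathbf{Ho}(\mathbb{B}(\mathbf{Vec}_G^\omega)))$ is the monoid of isomorphism classes $[X]$ with $X\otimes Y\cong Y\otimes X$ for all $Y$; the characteristic homomorphism sends $[(X,p)]$ to $[X]$. *)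

theory Defs
  imports "HOL-Algebra.Group" "Jordan_Normal_Form.Matrix"
          "HOL-Computational_Algebra.Polynomial"
begin

definition alg_closed :: "'k::field itself \<Rightarrow> bool" where
  "alg_closed _ \<longleftrightarrow> (\<forall>p :: 'k poly. degree p > 0 \<longrightarrow> (\<exists>x. poly p x = 0))"

definition normalized_3_cocycle ::
  "('g, 'b) monoid_scheme \<Rightarrow> ('g \<Rightarrow> 'g \<Rightarrow> 'g \<Rightarrow> 'k::field) \<Rightarrow> bool" where
  "normalized_3_cocycle G \<omega> \<longleftrightarrow>
     (\<forall>g\<in>carrier G. \<forall>h\<in>carrier G. \<forall>k\<in>carrier G. \<omega> g h k \<noteq> 0) \<and>
     (\<forall>g\<in>carrier G. \<forall>h\<in>carrier G. \<forall>k\<in>carrier G. \<forall>l\<in>carrier G.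
        \<omega> h k l * \<omega> g (h \<otimes>\<^bsub>G\<^esub> k) l * \<omega> g h k
          = \<omega> (g \<otimes>\<^bsub>G\<^esub> h) k l * \<omega> g h (k \<otimes>\<^bsub>G\<^esub> l)) \<and>
     (\<forall>g\<in>carrier G. \<forall>h\<in>carrier G.
        \<omega> \<one>\<^bsub>G\<^esub> g h = 1 \<and> \<omega> g \<one>\<^bsub>G\<^esub> h = 1 \<and> \<omega> g h \<one>\<^bsub>G\<^esub> = 1)"

definition gamma2 ::
  "('g \<Rightarrow> 'g \<Rightarrow> 'g \<Rightarrow> 'k::field) \<Rightarrow> 'g \<Rightarrow> 'g \<Rightarrow> 'g \<Rightarrow> 'k" where
  "gamma2 \<omega> z g h = \<omega> g h z * inverse (\<omega> g z h) * \<omega> z g h"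

text \<open>A 2-cochain represents the trivial class of H^2(G, K^x) (trivial action)
iff it is a coboundary of a 1-cochain beta : G \<rightarrow> K^x.\<close>

definition is_2_coboundary ::
  "('g, 'b) monoid_scheme \<Rightarrow> ('g \<Rightarrow> 'g \<Rightarrow> 'k::field) \<Rightarrow> bool" where
  "is_2_coboundary G c \<longleftrightarrow>
     (\<exists>\<beta> :: 'g \<Rightarrow> 'k. (\<forall>g\<in>carrier G. \<beta> g \<noteq> 0) \<and>
        (\<forall>g\<in>carrier G. \<forall>h\<in>carrier G.
            c g h = \<beta> g * \<beta> h * inverse (\<beta> (g \<otimes>\<^bsub>G\<^esub> h))))"

text \<open>Objects: finite lists of group elements [g_1,...,g_n], standing for the
direct sum of the simple objects X_{g_1},...,X_{g_n} (every finite-dimensional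
G-graded space is of this form).  Composition is matrix product.\<close>

definition vobj :: "('g, 'b) monoid_scheme \<Rightarrow> 'g list \<Rightarrow> bool" where
  "vobj G L \<longleftrightarrow> set L \<subseteq> carrier G"

definition vhom ::
  "'g list \<Rightarrow> 'g list \<Rightarrow> 'k::field mat \<Rightarrow> bool" where
  "vhom L M f \<longleftrightarrow> f \<in> carrier_mat (length M) (length L) \<and>
     (\<forall>i<length M. \<forall>j<length L. M ! i \<noteq> L ! j \<longrightarrow> f $$ (i, j) = 0)"

definition viso ::
  "'g list \<Rightarrow> 'g list \<Rightarrow> 'k::field mat \<Rightarrow> bool" where
  "viso L M f \<longleftrightarrow> vhom L M f \<and>
     (\<exists>q. vhom M L q \<and> q * f = 1\<^sub>m (length L) \<and> f * q = 1\<^sub>m (length M))"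

text \<open>Tensor product of objects: basis index (i,j) \<mapsto> i * length M + j.\<close>

definition vtens :: "('g, 'b) monoid_scheme \<Rightarrow> 'g list \<Rightarrow> 'g list \<Rightarrow> 'g list" where
  "vtens G L M = concat (map (\<lambda>g. map (\<lambda>h. g \<otimes>\<^bsub>G\<^esub> h) M) L)"

text \<open>Tensor product of morphisms: Kronecker product (same index convention).\<close>

definition kron :: "'k::field mat \<Rightarrow> 'k mat \<Rightarrow> 'k mat" where
  "kron A B = mat (dim_row A * dim_row B) (dim_col A * dim_col B)
     (\<lambda>(i, j). A $$ (i div dim_row B, j div dim_col B) * B $$ (i mod dim_row B, j mod dim_col B))"

text \<open>Associativity constraint (L \<otimes> M) \<otimes> N \<rightarrow> L \<otimes> (M \<otimes> N): diagonal, acting on the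
summand X_g \<otimes> X_h \<otimes> X_k by omega(g,h,k).  Index ((a,b),c) = (a*m+b)*n+c.\<close>

definition vassoc ::
  "('g \<Rightarrow> 'g \<Rightarrow> 'g \<Rightarrow> 'k::field) \<Rightarrow> 'g list \<Rightarrow> 'g list \<Rightarrow> 'g list \<Rightarrow> 'k mat" where
  "vassoc \<omega> L M N =
     (let m = length M; n = length N; d = length L * m * n in
      mat d d (\<lambda>(i, j). if i = j
         then \<omega> (L ! (i div (m * n))) (M ! ((i div n) mod m)) (N ! (i mod n)) else 0))"

definition vassoc_inv ::
  "('g \<Rightarrow> 'g \<Rightarrow> 'g \<Rightarrow> 'k::field) \<Rightarrow> 'g list \<Rightarrow> 'g list \<Rightarrow> 'g list \<Rightarrow> 'k mat" where
  "vassoc_inv \<omega> L M N =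
     (let m = length M; n = length N; d = length L * m * n in
      mat d d (\<lambda>(i, j). if i = j
         then inverse (\<omega> (L ! (i div (m * n))) (M ! ((i div n) mod m)) (N ! (i mod n))) else 0))"

text \<open>The unit object is [1]; since omega is normalized the unit constraints are
identities.  A half-braiding on an object X (i.e. a structure of an object of the
Drinfeld center on X): a family of isomorphisms p(Y) : X \<otimes> Y \<rightarrow> Y \<otimes> X, natural
in Y, with p(I) given by the unit constraints and the hexagon
p(Y \<otimes> Z) = a^{-1}_{Y,Z,X} (id_Y \<otimes> p(Z)) a_{Y,X,Z} (p(Y) \<otimes> id_Z) a^{-1}_{X,Y,Z}.\<close>

definition half_braiding ::
  "('g, 'b) monoid_scheme \<Rightarrow> ('g \<Rightarrow> 'g \<Rightarrow> 'g \<Rightarrow> 'k::field) \<Rightarrow> 'g list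
     \<Rightarrow> ('g list \<Rightarrow> 'k mat) \<Rightarrow> bool" where
  "half_braiding G \<omega> X p \<longleftrightarrow>
     (\<forall>Y. vobj G Y \<longrightarrow> viso (vtens G X Y) (vtens G Y X) (p Y)) \<and>
     (\<forall>Y Y' f. vobj G Y \<longrightarrow> vobj G Y' \<longrightarrow> vhom Y Y' f \<longrightarrow>
        p Y' * kron (1\<^sub>m (length X)) f = kron f (1\<^sub>m (length X)) * p Y) \<and>
     p [\<one>\<^bsub>G\<^esub>] = 1\<^sub>m (length X) \<and>
     (\<forall>Y Z. vobj G Y \<longrightarrow> vobj G Z \<longrightarrow>
        p (vtens G Y Z) =
          vassoc_inv \<omega> Y Z X * kron (1\<^sub>m (length Y)) (p Z) * vassoc \<omega> Y X Z
            * kron (p Y) (1\<^sub>m (length Z)) * vassoc_inv \<omega> X Y Z)"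

end

theory Submission
  imports Defs
begin

text \<open>A half-braiding on a simple object X_x is given on simple objects X_g by
invertible 1x1 matrices, i.e. by nonzero scalars beta(g).  Evaluating the hexagon
axiom at Y = X_g, Z = X_h gives
beta(gh) = beta(g) beta(h) omega(g,x,h) / (omega(g,h,x) omega(x,g,h)),
which says exactly that gamma_{omega,x} is the coboundary of beta.\<close>

lemma mult_mat_1_1 [simp]:
  fixes A B :: "'a::comm_ring_1 mat"
  assumes "A \<in> carrier_mat 1 1" "B \<in> carrier_mat 1 1"
  shows "A * B \<in> carrier_mat 1 1" "(A * B) $$ (0, 0) = A $$ (0, 0) * B $$ (0, 0)"
  using assms by (auto simp: scalar_prod_def)

lemma kron_mat_1_1 [simp]:
  fixes A B :: "'k::field mat"
  assumes "A \<in> carrier_mat 1 1" "B \<in> carrier_mat 1 1"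
  shows "kron A B \<in> carrier_mat 1 1" "kron A B $$ (0, 0) = A $$ (0, 0) * B $$ (0, 0)"
  using assms by (auto simp: kron_def)

lemma vassoc_singletons [simp]:
  "vassoc \<omega> [a] [b] [c] \<in> carrier_mat 1 1"
  "vassoc \<omega> [a] [b] [c] $$ (0, 0) = \<omega> a b c"
  "vassoc_inv \<omega> [a] [b] [c] \<in> carrier_mat 1 1"
  "vassoc_inv \<omega> [a] [b] [c] $$ (0, 0) = inverse (\<omega> a b c)"
  by (auto simp: vassoc_def vassoc_inv_def Let_def)

lemma vtens_singletons [simp]: "vtens G [a] [b] = [a \<otimes>\<^bsub>G\<^esub> b]"
  by (simp add: vtens_def)

lemma viso_singletons_nonzero:
  fixes f :: "'k::field mat"
  assumes "viso [a] [b] f"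
  shows "f \<in> carrier_mat 1 1" "f $$ (0, 0) \<noteq> 0"
proof -
  obtain q where q: "vhom [b] [a] q" "q * f = 1\<^sub>m 1"
    using assms by (auto simp: viso_def)
  show f: "f \<in> carrier_mat 1 1"
    using assms by (simp add: viso_def vhom_def)
  have "q \<in> carrier_mat 1 1"
    using q(1) by (simp add: vhom_def)
  moreover have "(q * f) $$ (0, 0) = 1"
    using q(2) by simp
  ultimately have "q $$ (0, 0) * f $$ (0, 0) = 1"
    using mult_mat_1_1(2)[OF _ f] by simp
  then show "f $$ (0, 0) \<noteq> 0" by auto
qed

lemma half_braiding_isoD:
  assumes "half_braiding G \<omega> X p" "vobj G Y"
  shows "viso (vtens G X Y) (vtens G Y X) (p Y)"
  using assms(1)[unfolded half_braiding_def, THEN conjunct1, rule_format, OF assms(2)] .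

lemma half_braiding_hexagonD:
  assumes "half_braiding G \<omega> X p" "vobj G Y" "vobj G Z"
  shows "p (vtens G Y Z) =
    vassoc_inv \<omega> Y Z X * kron (1\<^sub>m (length Y)) (p Z) * vassoc \<omega> Y X Z
      * kron (p Y) (1\<^sub>m (length Z)) * vassoc_inv \<omega> X Y Z"
  using assms(1)[unfolded half_braiding_def, THEN conjunct2, THEN conjunct2, THEN conjunct2,
      rule_format, OF assms(2,3)] .

lemma half_braiding_singleton_component:
  assumes "half_braiding G \<omega> [x] p" "g \<in> carrier G"
  shows "p [g] \<in> carrier_mat 1 1" "p [g] $$ (0, 0) \<noteq> 0"
proof -
  have "vobj G [g]"
    using assms(2) by (simp add: vobj_def)
  then have "viso (vtens G [x] [g]) (vtens G [g] [x]) (p [g])"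
    using assms(1) by (rule half_braiding_isoD[rotated])
  then have "viso [x \<otimes>\<^bsub>G\<^esub> g] [g \<otimes>\<^bsub>G\<^esub> x] (p [g])"
    by simp
  then show "p [g] \<in> carrier_mat 1 1" "p [g] $$ (0, 0) \<noteq> 0"
    by (rule viso_singletons_nonzero)+
qed

lemma half_braiding_singleton_hexagon:
  assumes hb: "half_braiding G \<omega> [x] p" and g: "g \<in> carrier G" and h: "h \<in> carrier G"
  shows "p [g \<otimes>\<^bsub>G\<^esub> h] $$ (0, 0) =
    inverse (\<omega> g h x) * p [h] $$ (0, 0) * \<omega> g x h * p [g] $$ (0, 0) * inverse (\<omega> x g h)"
proof -
  have "vobj G [g]" "vobj G [h]"
    using g h by (simp_all add: vobj_def)
  then have "p (vtens G [g] [h]) = vassoc_inv \<omega> [g] [h] [x] * kron (1\<^sub>m (length [g])) (p [h])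
      * vassoc \<omega> [g] [x] [h] * kron (p [g]) (1\<^sub>m (length [h])) * vassoc_inv \<omega> [x] [g] [h]"
    by (rule half_braiding_hexagonD[OF hb])
  moreover have "length [g] = 1" "length [h] = 1"
    by simp_all
  ultimately have "p [g \<otimes>\<^bsub>G\<^esub> h] = vassoc_inv \<omega> [g] [h] [x] * kron (1\<^sub>m 1) (p [h])
      * vassoc \<omega> [g] [x] [h] * kron (p [g]) (1\<^sub>m 1) * vassoc_inv \<omega> [x] [g] [h]"
    by (simp only: vtens_singletons)
  \<comment> \<open>One_nat_def would turn carrier_mat 1 1 into carrier_mat (Suc 0) (Suc 0),
    out of reach of the 1x1 simp rules above.\<close>
  then show ?thesis
    using half_braiding_singleton_component(1)[OF hb] g h by (simp del: One_nat_def)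
qed

lemma half_braiding_singleton_imp_coboundary:
  assumes "x \<in> carrier G"
    and nonzero: "\<forall>g\<in>carrier G. \<forall>h\<in>carrier G. \<forall>k\<in>carrier G. \<omega> g h k \<noteq> 0"
    and hb: "half_braiding G \<omega> [x] p"
  shows "is_2_coboundary G (gamma2 \<omega> x)"
proof -
  define \<beta> where "\<beta> g = p [g] $$ (0, 0)" for g
  have \<beta>_nonzero: "\<beta> g \<noteq> 0" if "g \<in> carrier G" for g
    unfolding \<beta>_def using hb that by (rule half_braiding_singleton_component(2))
  have "gamma2 \<omega> x g h = \<beta> g * \<beta> h * inverse (\<beta> (g \<otimes>\<^bsub>G\<^esub> h))"
    if g: "g \<in> carrier G" and h: "h \<in> carrier G" for g h
  proof -
    have "\<omega> g h x \<noteq> 0" "\<omega> g x h \<noteq> 0" "\<omega> x g h \<noteq> 0"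
      using nonzero g h \<open>x \<in> carrier G\<close> by simp_all
    moreover have "\<beta> g \<noteq> 0" "\<beta> h \<noteq> 0"
      using g h by (simp_all add: \<beta>_nonzero)
    moreover have hexagon: "\<beta> (g \<otimes>\<^bsub>G\<^esub> h) =
        inverse (\<omega> g h x) * \<beta> h * \<omega> g x h * \<beta> g * inverse (\<omega> x g h)"
      unfolding \<beta>_def using hb g h by (rule half_braiding_singleton_hexagon)
    ultimately show ?thesis
      unfolding hexagon gamma2_def by (simp add: field_simps)
  qed
  with \<beta>_nonzero show ?thesis
    unfolding is_2_coboundary_def by blast
qed

theorem proposition5p5:
  fixes G :: "('g, 'b) monoid_scheme"
    and \<omega> :: "'g \<Rightarrow> 'g \<Rightarrow> 'g \<Rightarrow> 'k::field_char_0"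
    and z :: 'g
  assumes "group G" and "finite (carrier G)"
    and "alg_closed TYPE('k)"
    and "normalized_3_cocycle G \<omega>"
    and "z \<in> carrier G" and "\<forall>g\<in>carrier G. g \<otimes>\<^bsub>G\<^esub> z = z \<otimes>\<^bsub>G\<^esub> g"
    and "\<not> is_2_coboundary G (gamma2 \<omega> z)"
  shows "\<not> (\<exists>p. half_braiding G \<omega> [z] p)"
proof
  assume "\<exists>p. half_braiding G \<omega> [z] p"
  then obtain p where "half_braiding G \<omega> [z] p" ..
  moreover have "\<forall>g\<in>carrier G. \<forall>h\<in>carrier G. \<forall>k\<in>carrier G. \<omega> g h k \<noteq> 0"
    using \<open>normalized_3_cocycle G \<omega>\<close> by (simp add: normalized_3_cocycle_def)
  ultimately have "is_2_coboundary G (gamma2 \<omega> z)"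
    using \<open>z \<in> carrier G\<close> by (blast intro: half_braiding_singleton_imp_coboundary)
  with \<open>\<not> is_2_coboundary G (gamma2 \<omega> z)\<close> show False ..
qed

end
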